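(* Let $r\ge4$, let $\delta>0$ be a sufficiently small constant, and let $p=o(1)$ with $p>Cn^{-2/(r+1)}(\log n)^{2/((r+1)(r-2))}$ for $C$ sufficiently large. There is a constant $K$ such that w.h.p. no balanced cut of $G_{n,p}$ admits more than $K/p$ bad vertices.
   Context: $V=[n]$ and $G=G_{n,p}$. A cut is an ordered partition $\Pi=(A_1,\dots,A_{r-1})$ of $V$. It is balanced if each block has size strictly between $(1-\delta)n/(r-1)$ and $(1+\delta)n/(r-1)$. $d_{A}(x)$ is the number of $G$-neighbours of $x$ in $A$, and $D_\Pi(x)=\sum_{1\le i<j\le r-1}d_{A_i}(x)d_{A_j}(x)$. With $\psi_r=\frac{r-4}{2(r-3)}$, $\xi_r=\frac{r(r-3)}{2(r-1)^2}$ and $\phi_r=(\psi_r+\xi_r)/2$, a vertex $x$ is bad for $\Pi$ if $x\in A_1$ and $D_\Pi(x)<\phi_rn^2p^2$. *)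

theory Defs
  imports Complex_Main
begin

text \<open>Vertex set V = [n] = {1..n}; a graph on V is a set of 2-element subsets of V.\<close>

definition vset :: "nat \<Rightarrow> nat set" where
  "vset n = {1..n}"

definition all_edges :: "nat \<Rightarrow> nat set set" where
  "all_edges n = {e. \<exists>x y. x \<in> vset n \<and> y \<in> vset n \<and> x \<noteq> y \<and> e = {x, y}}"

definition gnp_prob :: "nat \<Rightarrow> real \<Rightarrow> (nat set set \<Rightarrow> bool) \<Rightarrow> real" where
  "gnp_prob n p Q =
     (\<Sum>E \<in> {E. E \<subseteq> all_edges n \<and> Q E}.
        p ^ card E * (1 - p) ^ (card (all_edges n) - card E))"

text \<open>A cut is an ordered partition (A_1,...,A_{r-1}) of V, given as A :: nat => nat set
  indexed by 1..r-1.\<close>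
definition is_cut :: "nat \<Rightarrow> nat \<Rightarrow> (nat \<Rightarrow> nat set) \<Rightarrow> bool" where
  "is_cut n r A \<longleftrightarrow>
     (\<Union>i\<in>{1..r-1}. A i) = vset n \<and>
     (\<forall>i\<in>{1..r-1}. \<forall>j\<in>{1..r-1}. i \<noteq> j \<longrightarrow> A i \<inter> A j = {})"

definition balanced_cut :: "nat \<Rightarrow> nat \<Rightarrow> real \<Rightarrow> (nat \<Rightarrow> nat set) \<Rightarrow> bool" where
  "balanced_cut n r \<delta> A \<longleftrightarrow> is_cut n r A \<and>
     (\<forall>i\<in>{1..r-1}. (1 - \<delta>) * real n / real (r - 1) < real (card (A i)) \<and>
                    real (card (A i)) < (1 + \<delta>) * real n / real (r - 1))"

definition deg_in :: "nat set set \<Rightarrow> nat set \<Rightarrow> nat \<Rightarrow> nat" where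
  "deg_in E S x = card {y \<in> S. {x, y} \<in> E}"

definition D_cut :: "nat \<Rightarrow> nat set set \<Rightarrow> (nat \<Rightarrow> nat set) \<Rightarrow> nat \<Rightarrow> real" where
  "D_cut r E A x =
     (\<Sum>(i, j) \<in> {(i, j). 1 \<le> i \<and> i < j \<and> j \<le> r - 1}.
        real (deg_in E (A i) x) * real (deg_in E (A j) x))"

definition psi_r :: "nat \<Rightarrow> real" where
  "psi_r r = (real r - 4) / (2 * (real r - 3))"

definition xi_r :: "nat \<Rightarrow> real" where
  "xi_r r = real r * (real r - 3) / (2 * (real r - 1)^2)"

definition phi_r :: "nat \<Rightarrow> real" where
  "phi_r r = (psi_r r + xi_r r) / 2"

definition bad_vertex :: "nat \<Rightarrow> nat \<Rightarrow> real \<Rightarrow> nat set set \<Rightarrow> (nat \<Rightarrow> nat set) \<Rightarrow> nat \<Rightarrow> bool" where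
  "bad_vertex n r p E A x \<longleftrightarrow>
     x \<in> A 1 \<and> D_cut r E A x < phi_r r * (real n)^2 * p^2"

definition bad_set :: "nat \<Rightarrow> nat \<Rightarrow> real \<Rightarrow> nat set set \<Rightarrow> (nat \<Rightarrow> nat set) \<Rightarrow> nat set" where
  "bad_set n r p E A = {x \<in> vset n. bad_vertex n r p E A x}"

end

theory Submission
  imports Defs "HOL-Library.FuncSet" "HOL-Real_Asymp.Real_Asymp"
begin

text \<open>Choose \<open>\<kappa>\<close> with \<open>binom(r-1,2) \<kappa>\<^sup>2 = \<phi>\<^sub>r\<close>. Since \<open>\<phi>\<^sub>r < (r-2)/(2(r-1))\<close> we get
  \<open>\<kappa> (r-1) < 1\<close>, and a bad vertex has fewer than \<open>\<kappa> n p\<close> neighbours in some block, well below the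
  expected \<open>n p/(r-1)\<close>: otherwise \<open>D(x) \<ge> binom(r-1,2) (\<kappa> n p)\<^sup>2\<close>.
  If a balanced cut had more than \<open>K/p\<close> bad vertices, some \<open>m \<approx> K/p\<close> of them, each paired with
  such a block, would meet at most \<open>m \<kappa> n p\<close> of their \<open>\<ge> m (1-2\<delta>) n/(r-1)\<close> potential edges
  into these blocks. By a Chernoff bound this has probability \<open>exp(-\<Omega>(m n p)) = exp(-\<Omega>(K n))\<close>,
  which beats the union bound over the \<open>2\<^bsup>n(r-1)\<^esup>\<close> cuts and the \<open>(n(r-1))\<^sup>m\<close> choices of
  vertices and blocks as soon as \<open>K\<close> is large and \<open>p \<ge> 1/\<surd>n\<close>; for \<open>r \<ge> 4\<close> the assumed
  lower bound on \<open>p\<close> guarantees the latter.\<close>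

definition gnp_expect :: "nat \<Rightarrow> real \<Rightarrow> (nat set set \<Rightarrow> real) \<Rightarrow> real" where
  "gnp_expect n p G =
     (\<Sum>E\<in>Pow (all_edges n). p ^ card E * (1 - p) ^ (card (all_edges n) - card E) * G E)"

lemma finite_vset: "finite (vset n)"
  unfolding vset_def by simp

lemma finite_all_edges: "finite (all_edges n)"
proof -
  have "all_edges n \<subseteq> Pow (vset n)"
    unfolding all_edges_def by auto
  thus ?thesis
    using finite_vset by (meson finite_Pow_iff finite_subset)
qed

lemma gnp_prob_eq_gnp_expect: "gnp_prob n p Q = gnp_expect n p (\<lambda>E. if Q E then 1 else 0)"
proof -
  have "{E. E \<subseteq> all_edges n \<and> Q E} = Pow (all_edges n) \<inter> {E. Q E}"
    by auto
  thus ?thesis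
    unfolding gnp_prob_def gnp_expect_def
    by (simp add: sum.inter_restrict[OF finite_Pow_iff[THEN iffD2, OF finite_all_edges]]
        if_distrib cong: if_cong)
qed

lemma gnp_expect_mono:
  assumes "0 \<le> p" "p \<le> 1" and "\<And>E. E \<subseteq> all_edges n \<Longrightarrow> G E \<le> H E"
  shows "gnp_expect n p G \<le> gnp_expect n p H"
  unfolding gnp_expect_def using assms by (intro sum_mono mult_left_mono) auto

lemma gnp_expect_sum:
  "gnp_expect n p (\<lambda>E. \<Sum>i\<in>I. G i E) = (\<Sum>i\<in>I. gnp_expect n p (G i))"
  unfolding gnp_expect_def by (simp add: sum_distrib_left sum.swap[of _ "Pow _"])

lemma gnp_prob_nonneg: "0 \<le> p \<Longrightarrow> p \<le> 1 \<Longrightarrow> 0 \<le> gnp_prob n p Q"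
  unfolding gnp_prob_def by (intro sum_nonneg) simp

lemma gnp_prob_le_gnp_expect:
  assumes "0 \<le> p" "p \<le> 1"
    and "\<And>E. E \<subseteq> all_edges n \<Longrightarrow> 0 \<le> G E"
    and "\<And>E. E \<subseteq> all_edges n \<Longrightarrow> Q E \<Longrightarrow> 1 \<le> G E"
  shows "gnp_prob n p Q \<le> gnp_expect n p G"
  unfolding gnp_prob_eq_gnp_expect using assms by (intro gnp_expect_mono) auto

lemma gnp_prob_mono:
  assumes "0 \<le> p" "p \<le> 1" and "\<And>E. E \<subseteq> all_edges n \<Longrightarrow> Q E \<Longrightarrow> Q' E"
  shows "gnp_prob n p Q \<le> gnp_prob n p Q'"
  unfolding gnp_prob_eq_gnp_expect[of n p Q'] using assms
  by (intro gnp_prob_le_gnp_expect) auto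

lemma gnp_prob_ex_le_sum:
  assumes "finite I" "0 \<le> p" "p \<le> 1"
  shows "gnp_prob n p (\<lambda>E. \<exists>i\<in>I. Q i E) \<le> (\<Sum>i\<in>I. gnp_prob n p (Q i))"
proof -
  have "gnp_prob n p (\<lambda>E. \<exists>i\<in>I. Q i E) \<le> gnp_expect n p (\<lambda>E. \<Sum>i\<in>I. if Q i E then 1 else 0)"
  proof (rule gnp_prob_le_gnp_expect[OF assms(2,3)])
    fix E assume "\<exists>i\<in>I. Q i E"
    then obtain i where "i \<in> I" "Q i E" by blast
    thus "1 \<le> (\<Sum>i\<in>I. if Q i E then 1 else 0 :: real)"
      using member_le_sum[of i I "\<lambda>i. if Q i E then 1 else 0 :: real"] assms(1) by auto
  qed (simp add: sum_nonneg)
  thus ?thesis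
    by (simp add: gnp_expect_sum gnp_prob_eq_gnp_expect)
qed

lemma sum_Pow_power_card_Int:
  fixes p z :: "'a::comm_ring_1"
  assumes U: "finite U" and B: "B \<subseteq> U"
  shows "(\<Sum>E\<in>Pow U. p ^ card E * (1 - p) ^ (card U - card E) * z ^ card (E \<inter> B))
         = (1 - p + p * z) ^ card B"
proof -
  have "(1 - p + p * z) ^ card B = (\<Prod>e\<in>U. if e \<in> B then 1 - p + p * z else 1)"
    using U B by (simp add: prod.If_cases Int_absorb1)
  also have "\<dots> = (\<Prod>e\<in>U. p * (if e \<in> B then z else 1) + (1 - p))"
    by (rule prod.cong) auto
  also have "\<dots> = (\<Sum>X\<in>Pow U. (\<Prod>e\<in>X. p * (if e \<in> B then z else 1)) * (\<Prod>e\<in>U - X. 1 - p))"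
    by (rule prod_add[OF U])
  also have "\<dots> = (\<Sum>E\<in>Pow U. p ^ card E * (1 - p) ^ (card U - card E) * z ^ card (E \<inter> B))"
  proof (rule sum.cong[OF refl])
    fix X assume X: "X \<in> Pow U"
    hence "finite X"
      using U finite_subset by auto
    hence "(\<Prod>e\<in>X. p * (if e \<in> B then z else 1)) = p ^ card X * z ^ card (X \<inter> B)"
      by (simp add: prod.distrib prod.If_cases Int_commute)
    moreover have "(\<Prod>e\<in>U - X. 1 - p) = (1 - p) ^ (card U - card X)"
      using X U by (simp add: card_Diff_subset finite_subset)
    ultimately show "(\<Prod>e\<in>X. p * (if e \<in> B then z else 1)) * (\<Prod>e\<in>U - X. 1 - p)
        = p ^ card X * (1 - p) ^ (card U - card X) * z ^ card (X \<inter> B)"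
      by (simp add: mult_ac)
  qed
  finally show ?thesis ..
qed

lemma gnp_prob_card_Int_le:
  assumes B: "B \<subseteq> all_edges n" and p: "0 \<le> p" "p \<le> 1" and s: "0 \<le> s"
  shows "gnp_prob n p (\<lambda>E. real (card (E \<inter> B)) \<le> t)
           \<le> exp (s * t - p * (1 - exp (- s)) * card B)"
proof -
  have "gnp_prob n p (\<lambda>E. real (card (E \<inter> B)) \<le> t)
          \<le> gnp_expect n p (\<lambda>E. exp (s * t) * exp (- s) ^ card (E \<inter> B))"
  proof (rule gnp_prob_le_gnp_expect[OF p])
    fix E assume "real (card (E \<inter> B)) \<le> t"
    hence "0 \<le> s * t - s * card (E \<inter> B)"
      using s by (simp add: mult_left_mono flip: right_diff_distrib)
    thus "1 \<le> exp (s * t) * exp (- s) ^ card (E \<inter> B)"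
      by (simp add: exp_diff exp_minus field_simps flip: exp_of_nat_mult)
  qed simp
  also have "\<dots> = exp (s * t) * (1 - p + p * exp (- s)) ^ card B"
    using sum_Pow_power_card_Int[OF finite_all_edges B, of p "exp (- s)"]
    unfolding gnp_expect_def by (simp add: sum_distrib_left[symmetric] mult.left_commute)
  also have "\<dots> \<le> exp (s * t) * exp (- (p * (1 - exp (- s)))) ^ card B"
  proof (intro mult_left_mono power_mono)
    show "1 - p + p * exp (- s) \<le> exp (- (p * (1 - exp (- s))))"
      using exp_ge_add_one_self[of "- (p * (1 - exp (- s)))"] by (simp add: algebra_simps)
    show "0 \<le> 1 - p + p * exp (- s)"
      using p by simp
  qed simp
  also have "\<dots> = exp (s * t + real (card B) * - (p * (1 - exp (- s))))"
    by (simp only: exp_of_nat_mult exp_add)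
  also have "\<dots> = exp (s * t - p * (1 - exp (- s)) * card B)"
    by (simp add: algebra_simps)
  finally show ?thesis .
qed

definition index_pairs :: "nat \<Rightarrow> (nat \<times> nat) set" where
  "index_pairs k = {(i, j). 1 \<le> i \<and> i < j \<and> j \<le> k}"

lemma D_cut_index_pairs:
  "D_cut r E A x =
     (\<Sum>(i, j)\<in>index_pairs (r - 1). real (deg_in E (A i) x) * real (deg_in E (A j) x))"
  unfolding D_cut_def index_pairs_def ..

lemma finite_index_pairs: "finite (index_pairs k)"
  by (rule finite_subset[of _ "{..k} \<times> {..k}"]) (auto simp: index_pairs_def)

lemma card_index_pairs: "2 * card (index_pairs k) = k * (k - 1)"
proof (induction k)
  case 0
  have "index_pairs 0 = {}"
    by (auto simp: index_pairs_def)
  thus ?case by simp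
next
  case (Suc k)
  have "index_pairs (Suc k) = index_pairs k \<union> (\<lambda>i. (i, Suc k)) ` {1..k}"
    and "index_pairs k \<inter> (\<lambda>i. (i, Suc k)) ` {1..k} = {}"
    by (auto simp: index_pairs_def)
  hence "card (index_pairs (Suc k)) = card (index_pairs k) + card ((\<lambda>i. (i, Suc k)) ` {1..k})"
    by (simp add: card_Un_disjoint finite_index_pairs)
  also have "card ((\<lambda>i. (i, Suc k)) ` {1..k}) = k"
    by (subst card_image) (auto simp: inj_on_def)
  finally show ?case
    using Suc.IH by (cases k) (auto simp: algebra_simps)
qed

lemma D_cut_ge_card_index_pairs:
  assumes "0 \<le> L" and "\<And>i. i \<in> {1..r - 1} \<Longrightarrow> L \<le> real (deg_in E (A i) x)"
  shows "real (card (index_pairs (r - 1))) * L\<^sup>2 \<le> D_cut r E A x"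
proof -
  have "real (card (index_pairs (r - 1))) * L\<^sup>2 = (\<Sum>(i, j)\<in>index_pairs (r - 1). L * L)"
    by (simp add: power2_eq_square)
  also have "\<dots> \<le> D_cut r E A x"
    unfolding D_cut_index_pairs
    by (intro sum_mono) (auto simp: index_pairs_def intro!: mult_mono assms)
  finally show ?thesis .
qed

lemma bad_vertex_low_degree:
  assumes "bad_vertex n r p E A x" and "0 \<le> L"
    and "phi_r r * (real n)\<^sup>2 * p\<^sup>2 \<le> real (card (index_pairs (r - 1))) * L\<^sup>2"
  shows "\<exists>i\<in>{1..r - 1}. real (deg_in E (A i) x) < L"
  using assms D_cut_ge_card_index_pairs[of L r E A x]
  unfolding bad_vertex_def by (meson not_le order.strict_trans1)

lemma is_cut_subset_vset: "is_cut n r A \<Longrightarrow> i \<in> {1..r - 1} \<Longrightarrow> A i \<subseteq> vset n"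
  unfolding is_cut_def by blast

lemma balanced_cut_restrict:
  "balanced_cut n r \<delta> (restrict A {1..r - 1}) = balanced_cut n r \<delta> A"
  unfolding balanced_cut_def is_cut_def by simp

lemma bad_set_restrict:
  assumes "2 \<le> r"
  shows "bad_set n r p E (restrict A {1..r - 1}) = bad_set n r p E A"
proof -
  have "D_cut r E (restrict A {1..r - 1}) x = D_cut r E A x" for x
    unfolding D_cut_index_pairs by (intro sum.cong) (auto simp: index_pairs_def)
  moreover have "1 \<le> r - 1"
    using assms by simp
  ultimately show ?thesis
    unfolding bad_set_def bad_vertex_def by simp
qed

text \<open>Removing \<open>S\<close> from the blocks makes the edge sets of distinct vertices of \<open>S\<close> disjoint.\<close>

definition cross_edges :: "(nat \<Rightarrow> nat set) \<Rightarrow> nat set \<Rightarrow> (nat \<Rightarrow> nat) \<Rightarrow> nat set set" where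
  "cross_edges A S f = (\<Union>x\<in>S. (\<lambda>y. {x, y}) ` (A (f x) - S))"

lemma cross_edges_subset_all_edges:
  assumes "S \<subseteq> vset n" and "\<And>x. x \<in> S \<Longrightarrow> A (f x) \<subseteq> vset n"
  shows "cross_edges A S f \<subseteq> all_edges n"
  using assms unfolding cross_edges_def all_edges_def by blast

lemma card_cross_edges:
  assumes "finite S" and "\<And>x. x \<in> S \<Longrightarrow> finite (A (f x))"
  shows "card (cross_edges A S f) = (\<Sum>x\<in>S. card (A (f x) - S))"
proof -
  have "card (cross_edges A S f) = (\<Sum>x\<in>S. card ((\<lambda>y. {x, y}) ` (A (f x) - S)))"
    unfolding cross_edges_def using assms
    by (intro card_UN_disjoint) (auto simp: doubleton_eq_iff)
  also have "\<dots> = (\<Sum>x\<in>S. card (A (f x) - S))"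
    by (intro sum.cong refl card_image) (auto simp: inj_on_def doubleton_eq_iff)
  finally show ?thesis .
qed

lemma card_Int_cross_edges_le:
  assumes "finite S" and "\<And>x. x \<in> S \<Longrightarrow> finite (A (f x))"
  shows "card (E \<inter> cross_edges A S f) \<le> (\<Sum>x\<in>S. deg_in E (A (f x)) x)"
proof -
  let ?N = "\<lambda>x. {y \<in> A (f x). {x, y} \<in> E}"
  have "card (E \<inter> cross_edges A S f) \<le> card (\<Union>x\<in>S. (\<lambda>y. {x, y}) ` ?N x)"
    unfolding cross_edges_def using assms by (intro card_mono) auto
  also have "\<dots> \<le> (\<Sum>x\<in>S. card ((\<lambda>y. {x, y}) ` ?N x))"
    by (rule card_UN_le[OF assms(1)])
  also have "\<dots> \<le> (\<Sum>x\<in>S. deg_in E (A (f x)) x)"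
    unfolding deg_in_def by (intro sum_mono card_image_le) (simp add: assms)
  finally show ?thesis .
qed

lemma card_cross_edges_ge:
  assumes A: "balanced_cut n r \<delta> A" and S: "S \<subseteq> vset n" "card S = m"
    and f: "f \<in> S \<rightarrow> {1..r - 1}"
  shows "real m * ((1 - \<delta>) * real n / real (r - 1) - real m) \<le> real (card (cross_edges A S f))"
proof -
  have fin_S: "finite S"
    using S(1) finite_vset finite_subset by blast
  have fin_A: "finite (A (f x))" if "x \<in> S" for x
    using A f that is_cut_subset_vset[of n r A "f x"] finite_vset finite_subset
    unfolding balanced_cut_def by blast
  have "(1 - \<delta>) * real n / real (r - 1) - real m \<le> real (card (A (f x) - S))" if "x \<in> S" for x
  proof -
    have "(1 - \<delta>) * real n / real (r - 1) < real (card (A (f x)))"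
      using A f that unfolding balanced_cut_def by auto
    moreover have "card (A (f x)) - card S \<le> card (A (f x) - S)"
      by (rule diff_card_le_card_Diff[OF fin_S])
    hence "real (card (A (f x))) - real m \<le> real (card (A (f x) - S))"
      using S(2) by linarith
    ultimately show ?thesis
      by argo
  qed
  hence "real m * ((1 - \<delta>) * real n / real (r - 1) - real m) \<le> (\<Sum>x\<in>S. real (card (A (f x) - S)))"
    using sum_mono[of S "\<lambda>_. (1 - \<delta>) * real n / real (r - 1) - real m"] S(2) by simp
  also have "\<dots> = real (card (cross_edges A S f))"
    by (simp add: card_cross_edges[of S A f, OF fin_S fin_A])
  finally show ?thesis .
qed

lemma bad_set_low_cross_edges:
  assumes A: "is_cut n r A" and m: "m \<le> card (bad_set n r p E A)" and L: "0 \<le> L"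
    and phi: "phi_r r * (real n)\<^sup>2 * p\<^sup>2 \<le> real (card (index_pairs (r - 1))) * L\<^sup>2"
  shows "\<exists>S. S \<subseteq> vset n \<and> card S = m \<and>
           (\<exists>f\<in>S \<rightarrow>\<^sub>E {1..r - 1}. real (card (E \<inter> cross_edges A S f)) \<le> real m * L)"
proof -
  obtain S where S: "S \<subseteq> bad_set n r p E A" "card S = m" "finite S"
    using m by (rule obtain_subset_with_card_n)
  have "\<forall>x\<in>S. \<exists>i\<in>{1..r - 1}. real (deg_in E (A i) x) < L"
    using S(1) bad_vertex_low_degree[OF _ L phi] unfolding bad_set_def by blast
  then obtain f where f: "\<And>x. x \<in> S \<Longrightarrow> f x \<in> {1..r - 1} \<and> real (deg_in E (A (f x)) x) < L"
    by metis
  have Sv: "S \<subseteq> vset n"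
    using S(1) unfolding bad_set_def by auto
  have fin: "\<And>x. x \<in> S \<Longrightarrow> finite (A (f x))"
    using f is_cut_subset_vset[OF A] finite_vset finite_subset by blast
  have "real (card (E \<inter> cross_edges A S f)) \<le> (\<Sum>x\<in>S. real (deg_in E (A (f x)) x))"
    using card_Int_cross_edges_le[of S A f E, OF S(3) fin] by (simp flip: of_nat_sum)
  also have "\<dots> \<le> (\<Sum>x\<in>S. L)"
    using f by (intro sum_mono) (simp add: less_imp_le)
  also have "\<dots> = real m * L"
    using S(2) by simp
  finally have "real (card (E \<inter> cross_edges A S (restrict f S))) \<le> real m * L"
    by (simp add: cross_edges_def)
  moreover have "restrict f S \<in> S \<rightarrow>\<^sub>E {1..r - 1}"
    using f by simp
  ultimately show ?thesis
    using Sv S(2) by blast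
qed

definition balanced_cuts :: "nat \<Rightarrow> nat \<Rightarrow> real \<Rightarrow> (nat \<Rightarrow> nat set) set" where
  "balanced_cuts n r \<delta> = {A \<in> {1..r - 1} \<rightarrow>\<^sub>E Pow (vset n). balanced_cut n r \<delta> A}"

lemma finite_balanced_cuts: "finite (balanced_cuts n r \<delta>)"
  unfolding balanced_cuts_def by (simp add: finite_PiE finite_vset)

lemma card_balanced_cuts_le: "card (balanced_cuts n r \<delta>) \<le> 2 ^ (n * (r - 1))"
proof -
  have "card (balanced_cuts n r \<delta>) \<le> card ({1..r - 1} \<rightarrow>\<^sub>E Pow (vset n))"
    unfolding balanced_cuts_def by (rule card_mono) (auto simp: finite_PiE finite_vset)
  also have "\<dots> = 2 ^ (n * (r - 1))"
    by (simp add: card_PiE finite_vset card_Pow vset_def power_mult)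
  finally show ?thesis .
qed

lemma many_bad_vertices_low_cross_edges:
  assumes r: "2 \<le> r" and A: "balanced_cut n r \<delta> A" "m \<le> card (bad_set n r p E A)"
    and L: "0 \<le> L"
    and phi: "phi_r r * (real n)\<^sup>2 * p\<^sup>2 \<le> real (card (index_pairs (r - 1))) * L\<^sup>2"
  shows "\<exists>A'\<in>balanced_cuts n r \<delta>. \<exists>S\<in>{S. S \<subseteq> vset n \<and> card S = m}.
           \<exists>f\<in>S \<rightarrow>\<^sub>E {1..r - 1}. real (card (E \<inter> cross_edges A' S f)) \<le> real m * L"
proof -
  let ?A = "restrict A {1..r - 1}"
  have bal: "balanced_cut n r \<delta> ?A"
    using A(1) by (simp only: balanced_cut_restrict)
  hence cut: "is_cut n r ?A"
    unfolding balanced_cut_def by blast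
  hence "?A \<in> balanced_cuts n r \<delta>"
    using bal is_cut_subset_vset[of n r ?A] unfolding balanced_cuts_def by auto
  moreover have "m \<le> card (bad_set n r p E ?A)"
    using A(2) bad_set_restrict[OF r] by simp
  ultimately show ?thesis
    using bad_set_low_cross_edges[OF cut _ L phi] by blast
qed

lemma gnp_prob_low_cross_edges_le:
  assumes A: "A \<in> balanced_cuts n r \<delta>" and S: "S \<subseteq> vset n" "card S = m"
    and f: "f \<in> S \<rightarrow> {1..r - 1}" and p: "0 \<le> p" "p \<le> 1" and s: "0 \<le> s"
  shows "gnp_prob n p (\<lambda>E. real (card (E \<inter> cross_edges A S f)) \<le> t)
     \<le> exp (s * t - p * (1 - exp (- s)) * (real m * ((1 - \<delta>) * real n / real (r - 1) - real m)))"
proof -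
  have "cross_edges A S f \<subseteq> all_edges n"
    using A S f by (intro cross_edges_subset_all_edges) (auto simp: balanced_cuts_def)
  hence "gnp_prob n p (\<lambda>E. real (card (E \<inter> cross_edges A S f)) \<le> t)
      \<le> exp (s * t - p * (1 - exp (- s)) * card (cross_edges A S f))"
    by (rule gnp_prob_card_Int_le[OF _ p s])
  also have "\<dots> \<le> exp (s * t - p * (1 - exp (- s)) * (real m * ((1 - \<delta>) * real n / real (r - 1) - real m)))"
    using card_cross_edges_ge[of n r \<delta> A S m f] A S f p s
    by (auto simp: balanced_cuts_def intro!: mult_left_mono)
  finally show ?thesis .
qed

lemma gnp_prob_many_bad_vertices_le:
  assumes r: "2 \<le> r" and p: "0 \<le> p" "p \<le> 1" and s: "0 \<le> s" and L: "0 \<le> L"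
    and phi: "phi_r r * (real n)\<^sup>2 * p\<^sup>2 \<le> real (card (index_pairs (r - 1))) * L\<^sup>2"
  shows "gnp_prob n p (\<lambda>E. \<exists>A. balanced_cut n r \<delta> A \<and> m \<le> card (bad_set n r p E A))
     \<le> 2 ^ (n * (r - 1)) * real n ^ m * real (r - 1) ^ m
        * exp (s * (real m * L)
               - p * (1 - exp (- s)) * (real m * ((1 - \<delta>) * real n / real (r - 1) - real m)))"
    (is "_ \<le> _ * ?T")
proof -
  let ?cuts = "balanced_cuts n r \<delta>"
  let ?sets = "{S. S \<subseteq> vset n \<and> card S = m}"
  let ?Q = "\<lambda>A S f E. real (card (E \<inter> cross_edges A S f)) \<le> real m * L"
  have fin_maps: "finite (S \<rightarrow>\<^sub>E {1..r - 1})" if "S \<in> ?sets" for S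
    using that finite_vset finite_subset by (auto intro: finite_PiE)
  have "gnp_prob n p (\<lambda>E. \<exists>A. balanced_cut n r \<delta> A \<and> m \<le> card (bad_set n r p E A))
      \<le> gnp_prob n p (\<lambda>E. \<exists>A\<in>?cuts. \<exists>S\<in>?sets. \<exists>f\<in>S \<rightarrow>\<^sub>E {1..r - 1}. ?Q A S f E)"
    using many_bad_vertices_low_cross_edges[OF r _ _ L phi] by (intro gnp_prob_mono[OF p]) blast
  also have "\<dots> \<le> (\<Sum>A\<in>?cuts. gnp_prob n p (\<lambda>E. \<exists>S\<in>?sets. \<exists>f\<in>S \<rightarrow>\<^sub>E {1..r - 1}. ?Q A S f E))"
    by (rule gnp_prob_ex_le_sum[OF finite_balanced_cuts p])
  also have "\<dots> \<le> (\<Sum>A\<in>?cuts. \<Sum>S\<in>?sets. \<Sum>f\<in>S \<rightarrow>\<^sub>E {1..r - 1}. gnp_prob n p (?Q A S f))"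
    using finite_vset fin_maps
    by (intro sum_mono order_trans[OF gnp_prob_ex_le_sum[OF _ p]] gnp_prob_ex_le_sum[OF _ p]) simp_all
  also have "\<dots> \<le> (\<Sum>A\<in>?cuts. \<Sum>S\<in>?sets. \<Sum>f\<in>S \<rightarrow>\<^sub>E {1..r - 1}. ?T)"
  proof (intro sum_mono)
    fix A S f assume "A \<in> ?cuts" "S \<in> ?sets" "f \<in> S \<rightarrow>\<^sub>E {1..r - 1}"
    thus "gnp_prob n p (?Q A S f) \<le> ?T"
      by (intro gnp_prob_low_cross_edges_le[OF _ _ _ _ p s]) (auto simp: PiE_def)
  qed
  also have "\<dots> = real (card ?cuts) * real (card ?sets) * real (r - 1) ^ m * ?T"
  proof -
    have "card (S \<rightarrow>\<^sub>E {1..r - 1}) = (r - 1) ^ m" if "S \<in> ?sets" for S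
      using that finite_vset finite_subset by (subst card_PiE) auto
    thus ?thesis
      by simp
  qed
  also have "\<dots> \<le> 2 ^ (n * (r - 1)) * real n ^ m * real (r - 1) ^ m * ?T"
  proof -
    have cuts: "real (card ?cuts) \<le> 2 ^ (n * (r - 1))"
      using card_balanced_cuts_le by (simp flip: of_nat_power)
    have "card ?sets = n choose m"
      using n_subsets[OF finite_vset, of n m] by (simp add: vset_def)
    also have "\<dots> \<le> n ^ m"
      by (cases "m \<le> n") (simp_all add: binomial_le_pow binomial_eq_0)
    finally have sets: "real (card ?sets) \<le> real n ^ m"
      by (simp flip: of_nat_power)
    show ?thesis
      by (intro mult_right_mono mult_mono cuts sets) simp_all
  qed
  finally show ?thesis .
qed

lemma obtain_least_nat_greater:
  fixes x :: real
  assumes "0 \<le> x"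
  obtains m :: nat where "x < real m" "real m \<le> x + 1" "\<And>k. x < real k \<Longrightarrow> m \<le> k"
proof
  let ?m = "nat \<lfloor>x\<rfloor> + 1"
  show "x < real ?m" "real ?m \<le> x + 1"
    using assms by linarith+
  show "?m \<le> k" if "x < real k" for k
    using that assms by linarith
qed

text \<open>The three powers count the cuts, the vertex sets \<open>S\<close> and the block choices in the union bound.\<close>

lemma union_bound_exponent_le:
  fixes n m R :: nat and p \<gamma> K :: real
  assumes n: "1 \<le> n" and R: "1 \<le> R" and \<gamma>: "0 < \<gamma>" and dens: "sqrt n \<le> p * n"
    and log: "2 * (ln n + ln R) \<le> \<gamma> * sqrt n"
    and Km: "K \<le> m * p" and K: "2 * (R * ln 2 + 1) \<le> K * \<gamma>"
  shows "2 ^ (n * R) * real n ^ m * real R ^ m * exp (- \<gamma> * (m * n * p)) \<le> exp (- real n)"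
proof -
  have pow: "x ^ k = exp (real k * ln x)" if "0 < x" for x :: real and k
    using that by (simp add: exp_of_nat_mult)
  have "\<gamma> * sqrt n \<le> \<gamma> * (p * n)"
    using dens \<gamma> by (simp add: mult_left_mono)
  hence "real m * (2 * (ln n + ln R)) \<le> real m * (\<gamma> * (p * n))"
    using log by (intro mult_left_mono) simp_all
  moreover have "real n * (2 * (R * ln 2 + 1)) \<le> real n * (m * p * \<gamma>)"
    using K Km \<gamma> by (intro mult_left_mono order_trans[OF K] mult_right_mono) simp_all
  ultimately have "real (n * R) * ln 2 + real m * ln n + real m * ln R - \<gamma> * (m * n * p) \<le> - real n"
    by (simp add: algebra_simps)
  moreover have "2 ^ (n * R) * real n ^ m * real R ^ m * exp (- \<gamma> * (m * n * p))
      = exp (real (n * R) * ln 2 + real m * ln n + real m * ln R - \<gamma> * (m * n * p))"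
    using n R by (simp add: pow exp_add exp_diff exp_minus field_simps)
  ultimately show ?thesis
    by simp
qed

lemma one_minus_exp_neg_ge:
  fixes s :: real
  assumes "0 \<le> s"
  shows "s - s\<^sup>2 \<le> 1 - exp (- s)"
proof -
  have "exp (- s) \<le> 1 / (1 + s)"
    using exp_ge_add_one_self[of s] assms by (simp add: exp_minus divide_simps)
  also have "1 / (1 + s) \<le> 1 - s + s\<^sup>2"
    using assms by (simp add: divide_simps power2_eq_square) (simp add: algebra_simps)
  finally show ?thesis
    by linarith
qed

lemma obtain_tail_exponent:
  fixes \<kappa> \<beta> :: real
  assumes "0 \<le> \<kappa>" "\<kappa> < \<beta>"
  obtains s \<gamma> where "0 \<le> s" "0 < \<gamma>" "\<gamma> \<le> (1 - exp (- s)) * \<beta> - s * \<kappa>"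
proof
  \<comment> \<open>\<open>?s\<close> maximises the lower bound \<open>(s - s\<^sup>2) \<beta> - s \<kappa>\<close>, whose maximum is \<open>?\<gamma>\<close>.\<close>
  let ?s = "(\<beta> - \<kappa>) / (2 * \<beta>)" and ?\<gamma> = "(\<beta> - \<kappa>)\<^sup>2 / (4 * \<beta>)"
  have \<beta>: "0 < \<beta>"
    using assms by linarith
  show "0 \<le> ?s" "0 < ?\<gamma>"
    using assms \<beta> by auto
  have "?\<gamma> = (?s - ?s\<^sup>2) * \<beta> - ?s * \<kappa>"
    using \<beta> by (simp add: field_simps power2_eq_square)
  also have "\<dots> \<le> (1 - exp (- ?s)) * \<beta> - ?s * \<kappa>"
    using one_minus_exp_neg_ge[OF \<open>0 \<le> ?s\<close>] \<beta> by (simp add: mult_right_mono)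
  finally show "?\<gamma> \<le> (1 - exp (- ?s)) * \<beta> - ?s * \<kappa>" .
qed

lemma phi_r_bounds:
  assumes "4 \<le> r"
  shows "0 < phi_r r" "phi_r r < (real r - 2) / (2 * (real r - 1))"
proof -
  have r: "4 \<le> real r"
    using assms by simp
  have "0 \<le> psi_r r" "0 < xi_r r"
    unfolding psi_r_def xi_r_def using r by simp_all
  thus "0 < phi_r r"
    unfolding phi_r_def by simp
  define Y where "Y = (real r - 2) / (2 * (real r - 1))"
  have "psi_r r < Y"
    unfolding psi_r_def Y_def using r by (simp add: divide_simps) (simp add: algebra_simps)
  moreover have "xi_r r < Y"
    unfolding xi_r_def Y_def using r by (simp add: divide_simps power2_eq_square) (simp add: algebra_simps)
  ultimately show "phi_r r < Y"
    unfolding phi_r_def by (simp add: field_simps)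
qed

lemma obtain_degree_ratio:
  assumes "4 \<le> r"
  obtains \<kappa> :: real where "0 \<le> \<kappa>" "phi_r r \<le> real (card (index_pairs (r - 1))) * \<kappa>\<^sup>2"
    "\<kappa> * real (r - 1) < 1"
proof
  define P where "P = real (card (index_pairs (r - 1)))"
  have R: "real (r - 1) = real r - 1" "3 \<le> real (r - 1)"
    using assms by auto
  have "real (2 * card (index_pairs (r - 1))) = real ((r - 1) * (r - 1 - 1))"
    by (simp only: card_index_pairs)
  hence P: "P = (real r - 1) * (real r - 2) / 2"
    using assms unfolding P_def by (simp add: of_nat_diff)
  have P0: "0 < P"
    using assms unfolding P by simp
  let ?\<kappa> = "sqrt (phi_r r / P)"
  show "0 \<le> ?\<kappa>" "phi_r r \<le> P * ?\<kappa>\<^sup>2"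
    using phi_r_bounds[OF assms] P0 by simp_all
  have "phi_r r * (real r - 1)\<^sup>2 < P"
    using phi_r_bounds(2)[OF assms] assms unfolding P
    by (simp add: divide_simps power2_eq_square) (simp add: algebra_simps)
  hence "(?\<kappa> * real (r - 1))\<^sup>2 < 1\<^sup>2"
    using phi_r_bounds(1)[OF assms] P0 R by (simp add: power_mult_distrib divide_simps)
  thus "?\<kappa> * real (r - 1) < 1"
    by (rule power_less_imp_less_base) simp
qed

lemma gnp_prob_many_bad_vertices_le_exp:
  fixes r n :: nat and p \<delta> \<kappa> s \<gamma> K :: real
  assumes r: "2 \<le> r" and n: "1 \<le> n" and p: "p \<le> 1" and dens: "sqrt n \<le> p * n"
    and \<kappa>: "0 \<le> \<kappa>" "phi_r r \<le> real (card (index_pairs (r - 1))) * \<kappa>\<^sup>2"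
    and s: "0 \<le> s" and \<gamma>: "0 < \<gamma>" "\<gamma> \<le> (1 - exp (- s)) * ((1 - 2 * \<delta>) / real (r - 1)) - s * \<kappa>"
    and K: "0 \<le> K" "2 * (real (r - 1) * ln 2 + 1) \<le> K * \<gamma>"
    and small: "K * sqrt n + 1 \<le> \<delta> * n / real (r - 1)"
    and log: "2 * (ln n + ln (real (r - 1))) \<le> \<gamma> * sqrt n"
  shows "gnp_prob n p (\<lambda>E. \<exists>A. balanced_cut n r \<delta> A \<and> K / p < real (card (bad_set n r p E A)))
           \<le> exp (- real n)"
proof -
  let ?R = "real (r - 1)"
  have "sqrt n * 1 \<le> sqrt n * (p * sqrt n)"
    using dens by (simp add: mult_ac flip: real_sqrt_mult_self[of n])
  hence "1 \<le> p * sqrt n"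
    using n by simp
  moreover from this have p0: "0 < p"
    using zero_less_mult_iff[of p "sqrt n"] by auto
  ultimately have inv_p: "1 / p \<le> sqrt n"
    by (simp add: pos_divide_le_eq mult.commute)
  obtain m :: nat where m: "K / p < m" "m \<le> K / p + 1" "\<And>k. K / p < real k \<Longrightarrow> m \<le> k"
    using obtain_least_nat_greater[of "K / p"] K p0 by auto
  have "K / p \<le> K * sqrt n"
    using mult_left_mono[OF inv_p K(1)] by simp
  hence "m \<le> \<delta> * n / ?R"
    using m(2) small by argo
  moreover have "(1 - \<delta>) * n / ?R = (1 - 2 * \<delta>) * n / ?R + \<delta> * n / ?R"
    by (simp only: add_divide_distrib[symmetric]) (simp add: algebra_simps)
  ultimately have block: "(1 - 2 * \<delta>) * n / ?R \<le> (1 - \<delta>) * n / ?R - m"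
    by argo
  have phi: "phi_r r * (real n)\<^sup>2 * p\<^sup>2 \<le> real (card (index_pairs (r - 1))) * (\<kappa> * n * p)\<^sup>2"
    using mult_right_mono[OF \<kappa>(2), of "(real n)\<^sup>2 * p\<^sup>2"] by (simp add: power_mult_distrib mult_ac)
  have "gnp_prob n p (\<lambda>E. \<exists>A. balanced_cut n r \<delta> A \<and> K / p < real (card (bad_set n r p E A)))
      \<le> gnp_prob n p (\<lambda>E. \<exists>A. balanced_cut n r \<delta> A \<and> m \<le> card (bad_set n r p E A))"
    using p0 p m(3) by (intro gnp_prob_mono) auto
  also have "\<dots> \<le> 2 ^ (n * (r - 1)) * real n ^ m * ?R ^ m
        * exp (s * (m * (\<kappa> * n * p)) - p * (1 - exp (- s)) * (m * ((1 - \<delta>) * n / ?R - m)))"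
    using gnp_prob_many_bad_vertices_le[OF r _ p s _ phi] p0 \<kappa>(1) by simp
  also have "\<dots> \<le> 2 ^ (n * (r - 1)) * real n ^ m * ?R ^ m * exp (- \<gamma> * (m * n * p))"
  proof -
    have "s * (m * (\<kappa> * n * p)) - p * (1 - exp (- s)) * (m * ((1 - \<delta>) * n / ?R - m))
        \<le> s * (m * (\<kappa> * n * p)) - p * (1 - exp (- s)) * (m * ((1 - 2 * \<delta>) * n / ?R))"
      using block p0 s by (intro diff_left_mono mult_left_mono) auto
    also have "\<dots> = - ((1 - exp (- s)) * ((1 - 2 * \<delta>) / ?R) - s * \<kappa>) * (m * n * p)"
      by (simp add: field_simps)
    also have "\<dots> \<le> - \<gamma> * (m * n * p)"
      using \<gamma>(2) p0 by (intro mult_right_mono) auto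
    finally show ?thesis
      by (intro mult_left_mono) auto
  qed
  also have "\<dots> \<le> exp (- real n)"
  proof (rule union_bound_exponent_le[OF n _ \<gamma>(1) dens])
    show "1 \<le> r - 1"
      using r by simp
    show "2 * (real (r - 1) * ln 2 + 1) \<le> K * \<gamma>" "2 * (ln n + ln (real (r - 1))) \<le> \<gamma> * sqrt n"
      using K(2) log by simp_all
    show "K \<le> m * p"
      using m(1) p0 by (simp add: field_simps)
  qed
  finally show ?thesis .
qed

lemma sqrt_le_edge_density:
  fixes r n :: nat and C p :: real
  assumes r: "4 \<le> r" and C: "1 \<le> C" and n: "3 \<le> n"
    and p: "C * real n powr (-2 / (real r + 1)) * ln (real n) powr (2 / ((real r + 1) * (real r - 2))) < p"
  shows "sqrt n \<le> p * n"
proof -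
  have "exp 1 \<le> real n"
    using n exp_le by linarith
  hence "1 \<le> ln (real n)"
    using n by (simp add: ln_ge_iff)
  hence "1 \<le> ln (real n) powr (2 / ((real r + 1) * (real r - 2)))"
    using r by (intro ge_one_powr_ge_zero) auto
  hence "1 * real n powr (-2 / (real r + 1)) * 1
      \<le> C * real n powr (-2 / (real r + 1)) * ln (real n) powr (2 / ((real r + 1) * (real r - 2)))"
    using C by (intro mult_mono) auto
  hence p_ge: "real n powr (-2 / (real r + 1)) \<le> p"
    using p by simp
  have "sqrt n = real n powr (1 / 2)"
    by (simp add: powr_half_sqrt)
  also have "\<dots> \<le> real n powr (-2 / (real r + 1) + 1)"
    using n r by (intro powr_mono) (auto simp: divide_simps)
  also have "\<dots> = real n powr (-2 / (real r + 1)) * n"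
    unfolding powr_add using n by simp
  also have "\<dots> \<le> p * n"
    using p_ge by (rule mult_right_mono) simp
  finally show ?thesis .
qed

lemma eventually_sqrt_le_edge_density:
  fixes r :: nat and C :: real and p :: "nat \<Rightarrow> real"
  assumes "4 \<le> r" and "1 \<le> C"
    and "\<forall>\<^sub>F n in sequentially.
           p n > C * real n powr (-2 / (real r + 1)) * ln (real n) powr (2 / ((real r + 1) * (real r - 2)))"
  shows "\<forall>\<^sub>F n in sequentially. sqrt n \<le> p n * n"
  using assms(3) eventually_ge_at_top[of 3]
  by eventually_elim (rule sqrt_le_edge_density[OF assms(1,2)])

lemma many_bad_vertices_tendsto_zero:
  fixes r :: nat and \<kappa> \<delta> :: real
  assumes r: "2 \<le> r" and \<kappa>: "0 \<le> \<kappa>" "phi_r r \<le> real (card (index_pairs (r - 1))) * \<kappa>\<^sup>2"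
    and \<delta>: "0 < \<delta>" "\<delta> < (1 - \<kappa> * real (r - 1)) / 2"
  shows "\<exists>K::real. \<forall>p :: nat \<Rightarrow> real.
           (p \<longlonglongrightarrow> 0) \<and> (\<forall>\<^sub>F n in sequentially. sqrt n \<le> p n * n) \<longrightarrow>
           (\<lambda>n. gnp_prob n (p n) (\<lambda>E. \<exists>A. balanced_cut n r \<delta> A \<and>
                                         real (card (bad_set n r (p n) E A)) > K / p n)) \<longlonglongrightarrow> 0"
proof -
  let ?R = "real (r - 1)"
  have "\<kappa> < (1 - 2 * \<delta>) / ?R"
    using \<delta>(2) r by (simp add: field_simps)
  then obtain s \<gamma> where s: "0 \<le> s" and \<gamma>: "0 < \<gamma>" "\<gamma> \<le> (1 - exp (- s)) * ((1 - 2 * \<delta>) / ?R) - s * \<kappa>"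
    using obtain_tail_exponent[OF \<kappa>(1)] by blast
  define K where "K = 2 * (?R * ln 2 + 1) / \<gamma>"
  have K: "0 \<le> K" "2 * (?R * ln 2 + 1) \<le> K * \<gamma>"
    using \<gamma>(1) r unfolding K_def by simp_all
  show ?thesis
  proof (intro exI[of _ K] allI impI)
    fix p :: "nat \<Rightarrow> real"
    let ?P = "\<lambda>n. gnp_prob n (p n) (\<lambda>E. \<exists>A. balanced_cut n r \<delta> A \<and>
                                          real (card (bad_set n r (p n) E A)) > K / p n)"
    assume p: "(p \<longlonglongrightarrow> 0) \<and> (\<forall>\<^sub>F n in sequentially. sqrt n \<le> p n * n)"
    have "\<forall>\<^sub>F n in sequentially. p n < 1"
      using order_tendstoD(2)[OF conjunct1[OF p], of 1] by simp
    moreover note conjunct2[OF p]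
    moreover have "\<forall>\<^sub>F n in sequentially. K * sqrt n + 1 \<le> \<delta> * n / ?R"
      using \<delta>(1) r by real_asymp
    moreover have "\<forall>\<^sub>F n in sequentially. 2 * (ln n + ln ?R) \<le> \<gamma> * sqrt n"
      using \<gamma>(1) by real_asymp
    moreover note eventually_ge_at_top[of 1]
    ultimately have bound: "\<forall>\<^sub>F n in sequentially. 0 \<le> ?P n \<and> ?P n \<le> exp (- real n)"
    proof eventually_elim
      case (elim n)
      have "0 \<le> p n * n"
        using \<open>sqrt n \<le> p n * n\<close> real_sqrt_ge_zero[of n] by linarith
      hence "0 \<le> p n"
        using \<open>1 \<le> n\<close> by (simp add: zero_le_mult_iff)
      thus ?case
        using gnp_prob_nonneg gnp_prob_many_bad_vertices_le_exp[OF r _ _ _ \<kappa> s \<gamma> K] elim by auto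
    qed
    have lower: "\<forall>\<^sub>F n in sequentially. 0 \<le> ?P n"
      using bound by (rule eventually_mono) simp
    have upper: "\<forall>\<^sub>F n in sequentially. ?P n \<le> exp (- real n)"
      using bound by (rule eventually_mono) simp
    have "(\<lambda>n. exp (- real n)) \<longlonglongrightarrow> 0"
      by real_asymp
    then show "?P \<longlonglongrightarrow> 0"
      by (rule tendsto_sandwich[OF lower upper tendsto_const])
  qed
qed

theorem mainTheorem13:
  fixes r :: nat
  assumes "r \<ge> 4"
  shows "\<exists>\<delta>0>0. \<forall>\<delta>. 0 < \<delta> \<and> \<delta> < \<delta>0 \<longrightarrow>
           (\<exists>C0. \<forall>C\<ge>C0. \<exists>K::real. \<forall>p :: nat \<Rightarrow> real.
              (p \<longlonglongrightarrow> 0) \<and>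
              (\<forall>\<^sub>F n in sequentially.
                  p n > C * real n powr (-2 / (real r + 1))
                          * ln (real n) powr (2 / ((real r + 1) * (real r - 2))))
              \<longrightarrow>
              ((\<lambda>n. gnp_prob n (p n)
                   (\<lambda>E. \<exists>A. balanced_cut n r \<delta> A \<and>
                          real (card (bad_set n r (p n) E A)) > K / p n))
                \<longlonglongrightarrow> 0))"
proof -
  obtain \<kappa> where \<kappa>: "0 \<le> \<kappa>" "phi_r r \<le> real (card (index_pairs (r - 1))) * \<kappa>\<^sup>2"
    "\<kappa> * real (r - 1) < 1"
    using obtain_degree_ratio[OF assms] by blast
  have "0 < (1 - \<kappa> * real (r - 1)) / 2"
    using \<kappa>(3) by simp
  moreover have "2 \<le> r"
    using assms by simp
  ultimately show ?thesis
    using many_bad_vertices_tendsto_zero[OF _ \<kappa>(1,2)] eventually_sqrt_le_edge_density[OF assms]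
    by blast
qed

end
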